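(* Let $B$ be any group and $p\ge 2$ an integer. If $w\in (B\wr C_p)'$, then $w$ can be written as the wreath recursion $$w=\Big(r_1,r_2,\dots,r_{p-1},\; r_1^{-1}\cdots r_{p-1}^{-1}\prod_{j=1}^{k}[f_j,g_j]\Big)$$ for some $r_1,\dots,r_{p-1},f_j,g_j\in B$ and some $k\le cw(B)$.
   Context: $C_p$ is the cyclic group of order $p$ acting on $\{1,\dots,p\}$ by $\sigma=(1,2,\dots,p)$. Elements of $B\wr C_p=B^p\rtimes C_p$ are written $(b_1,\dots,b_p)\tau$, with multiplication $(g_1,\dots,g_p)\tau\cdot(h_1,\dots,h_p)\rho=(g_1h_{\tau(1)},\dots,g_ph_{\tau(p)})\tau\rho$; $(b_1,\dots,b_p)$ denotes an element with trivial $C_p$-part. The commutator is $[a,b]=aba^{-1}b^{-1}$. The commutator length of $g\in G'$ is the least $n$ such that $g$ is a product of $n$ commutators; the commutator width $cw(G)$ is the maximum of commutator lengths over elements of $G'$. *)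

theory Defs
  imports "HOL-Algebra.Algebra" "HOL-Library.Extended_Nat"
begin

definition comm :: "('a, 'm) monoid_scheme \<Rightarrow> 'a \<Rightarrow> 'a \<Rightarrow> 'a" where
  "comm G a b = a \<otimes>\<^bsub>G\<^esub> b \<otimes>\<^bsub>G\<^esub> inv\<^bsub>G\<^esub> a \<otimes>\<^bsub>G\<^esub> inv\<^bsub>G\<^esub> b"

definition prodl :: "('a, 'm) monoid_scheme \<Rightarrow> 'a list \<Rightarrow> 'a" where
  "prodl G xs = foldr (\<lambda>x y. x \<otimes>\<^bsub>G\<^esub> y) xs \<one>\<^bsub>G\<^esub>"

definition comm_prod :: "('a, 'm) monoid_scheme \<Rightarrow> (nat \<Rightarrow> 'a) \<Rightarrow> (nat \<Rightarrow> 'a) \<Rightarrow> nat \<Rightarrow> 'a" where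
  "comm_prod G f g n = prodl G (map (\<lambda>j. comm G (f j) (g j)) [1..<n+1])"

definition comm_length :: "('a, 'm) monoid_scheme \<Rightarrow> 'a \<Rightarrow> nat" where
  "comm_length G x = (LEAST n. \<exists>f g. (\<forall>j. f j \<in> carrier G \<and> g j \<in> carrier G)
                                  \<and> x = comm_prod G f g n)"

definition cw :: "('a, 'm) monoid_scheme \<Rightarrow> enat" where
  "cw G = (SUP x \<in> derived G (carrier G). enat (comm_length G x))"

(* An element (b_1,...,b_p) sigma^t is represented
   as the pair (b, t) with b an extensional function on {1..p} and 0 <= t < p.
   sigma^t acts on {1..p} by i |-> ((i - 1 + t) mod p) + 1 (sigma = (1 2 ... p)). *)
definition cyc_act :: "nat \<Rightarrow> nat \<Rightarrow> nat \<Rightarrow> nat" where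
  "cyc_act p t i = ((i - 1 + t) mod p) + 1"

definition wreath :: "('b, 'm) monoid_scheme \<Rightarrow> nat \<Rightarrow> ((nat \<Rightarrow> 'b) \<times> nat) monoid" where
  "wreath B p = \<lparr> carrier = {(b, t). b \<in> {1..p} \<rightarrow>\<^sub>E carrier B \<and> t < p},
     monoid.mult = (\<lambda>x y. ((\<lambda>i\<in>{1..p}. fst x i \<otimes>\<^bsub>B\<^esub> fst y (cyc_act p (snd x) i)), (snd x + snd y) mod p)),
     one = ((\<lambda>i\<in>{1..p}. \<one>\<^bsub>B\<^esub>), 0) \<rparr>"

end

theory Submission
  imports Defs
begin

(* The top component (b, t) |-> t in Z/p and the coordinate product (b, t) |-> b_1 ... b_p B'
   in the abelianization B/B' are homomorphisms from B wr C_p to abelian groups (the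
   C_p-part only permutes the coordinates, which does not matter in an abelian group), so
   both vanish on (B wr C_p)'. Hence w = (a, 0), and c = (a_1^-1 ... a_(p-1)^-1)^-1 a_p has
   image a_1 ... a_p B' = B' in B/B', i.e. c lies in B'. Taking r_i = a_i and writing c as a
   product of comm_length c <= cw(B) commutators gives the recursion. *)

lemma cyc_act_in_range: "0 < p \<Longrightarrow> cyc_act p t i \<in> {1..p}"
  unfolding cyc_act_def by (simp add: Suc_le_eq)

lemma cyc_act_cyc_act:
  "i \<in> {1..p} \<Longrightarrow> cyc_act p s (cyc_act p t i) = cyc_act p ((t + s) mod p) i"
  by (cases i) (auto simp: cyc_act_def mod_add_left_eq mod_add_right_eq add.assoc)

lemma cyc_act_0: "i \<in> {1..p} \<Longrightarrow> cyc_act p 0 i = i"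
  unfolding cyc_act_def by auto

lemma bij_betw_cyc_act:
  assumes "t < p"
  shows "bij_betw (cyc_act p t) {1..p} {1..p}"
proof -
  have "cyc_act p u i \<in> {1..p}" for u i
    using assms by (intro cyc_act_in_range) simp
  then show ?thesis
    using assms by (intro bij_betw_byWitness[where f' = "cyc_act p (p - t)"])
      (auto simp: cyc_act_cyc_act cyc_act_0)
qed

lemma PiE_mem_cyc_act: "a \<in> {1..p} \<rightarrow>\<^sub>E A \<Longrightarrow> 0 < p \<Longrightarrow> a (cyc_act p t i) \<in> A"
  using cyc_act_in_range by blast

lemma (in comm_monoid) finprod_cyc_act:
  assumes "f \<in> {1..p} \<rightarrow> carrier G" and "t < p"
  shows "finprod G (\<lambda>i. f (cyc_act p t i)) {1..p} = finprod G f {1..p}"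
  using finprod_reindex[of f "cyc_act p t" "{1..p}"] assms bij_betw_cyc_act[OF assms(2)]
  by (simp add: bij_betw_def)

lemma mem_carrier_wreath:
  "(a, s) \<in> carrier (wreath B p) \<longleftrightarrow> a \<in> {1..p} \<rightarrow>\<^sub>E carrier B \<and> s < p"
  by (simp add: wreath_def)

lemma carrier_wreathE:
  assumes "x \<in> carrier (wreath B p)"
  obtains a s where "x = (a, s)" "a \<in> {1..p} \<rightarrow>\<^sub>E carrier B" "s < p"
  using assms by (cases x) (simp add: mem_carrier_wreath)

lemma mult_wreath:
  "(a, s) \<otimes>\<^bsub>wreath B p\<^esub> (b, t) =
     ((\<lambda>i\<in>{1..p}. a i \<otimes>\<^bsub>B\<^esub> b (cyc_act p s i)), (s + t) mod p)"
  by (simp add: wreath_def)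

lemma one_wreath: "\<one>\<^bsub>wreath B p\<^esub> = ((\<lambda>i\<in>{1..p}. \<one>\<^bsub>B\<^esub>), 0)"
  by (simp add: wreath_def)

lemma (in monoid) wreath_mult_closed:
  assumes "x \<in> carrier (wreath G p)" and "y \<in> carrier (wreath G p)"
  shows "x \<otimes>\<^bsub>wreath G p\<^esub> y \<in> carrier (wreath G p)"
proof -
  obtain a s b t where xy: "x = (a, s)" "y = (b, t)" "s < p"
    and a: "a \<in> {1..p} \<rightarrow>\<^sub>E carrier G" and b: "b \<in> {1..p} \<rightarrow>\<^sub>E carrier G"
    using assms by (metis carrier_wreathE)
  then have "a i \<otimes> b (cyc_act p s i) \<in> carrier G" if "i \<in> {1..p}" for i
    using PiE_mem[OF a that] PiE_mem_cyc_act[OF b] by simp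
  with xy show ?thesis
    by (simp add: mem_carrier_wreath mult_wreath)
qed

lemma (in monoid) wreath_mult_assoc:
  assumes "x \<in> carrier (wreath G p)" and "y \<in> carrier (wreath G p)" and "z \<in> carrier (wreath G p)"
  shows "x \<otimes>\<^bsub>wreath G p\<^esub> y \<otimes>\<^bsub>wreath G p\<^esub> z = x \<otimes>\<^bsub>wreath G p\<^esub> (y \<otimes>\<^bsub>wreath G p\<^esub> z)"
proof -
  obtain a s b t c u where xyz: "x = (a, s)" "y = (b, t)" "z = (c, u)" "s < p"
    and a: "a \<in> {1..p} \<rightarrow>\<^sub>E carrier G" and b: "b \<in> {1..p} \<rightarrow>\<^sub>E carrier G"
    and c: "c \<in> {1..p} \<rightarrow>\<^sub>E carrier G"
    using assms by (metis carrier_wreathE)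
  have "(\<lambda>i\<in>{1..p}. (\<lambda>i\<in>{1..p}. a i \<otimes> b (cyc_act p s i)) i \<otimes> c (cyc_act p ((s + t) mod p) i))
      = (\<lambda>i\<in>{1..p}. a i \<otimes> (\<lambda>i\<in>{1..p}. b i \<otimes> c (cyc_act p t i)) (cyc_act p s i))"
  proof (rule restrict_ext)
    fix i assume i: "i \<in> {1..p}"
    have "cyc_act p s i \<in> {1..p}"
      using \<open>s < p\<close> by (intro cyc_act_in_range) simp
    with i PiE_mem[OF a i] PiE_mem_cyc_act[OF b] PiE_mem_cyc_act[OF c] \<open>s < p\<close>
    show "(\<lambda>i\<in>{1..p}. a i \<otimes> b (cyc_act p s i)) i \<otimes> c (cyc_act p ((s + t) mod p) i)
        = a i \<otimes> (\<lambda>i\<in>{1..p}. b i \<otimes> c (cyc_act p t i)) (cyc_act p s i)"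
      by (simp add: cyc_act_cyc_act m_assoc)
  qed
  moreover have "((s + t) mod p + u) mod p = (s + (t + u) mod p) mod p"
    by (simp add: mod_add_left_eq mod_add_right_eq add.assoc)
  ultimately show ?thesis
    unfolding xyz mult_wreath by (simp only: fst_conv snd_conv)
qed

lemma (in monoid) wreath_l_one:
  assumes "x \<in> carrier (wreath G p)"
  shows "\<one>\<^bsub>wreath G p\<^esub> \<otimes>\<^bsub>wreath G p\<^esub> x = x"
proof -
  obtain a s where x: "x = (a, s)" "s < p" and a: "a \<in> {1..p} \<rightarrow>\<^sub>E carrier G"
    using assms by (rule carrier_wreathE)
  have "(\<lambda>i\<in>{1..p}. (\<lambda>i\<in>{1..p}. \<one>) i \<otimes> a (cyc_act p 0 i)) = a"
  proof
    fix i
    show "(\<lambda>i\<in>{1..p}. (\<lambda>i\<in>{1..p}. \<one>) i \<otimes> a (cyc_act p 0 i)) i = a i"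
      using PiE_mem[OF a, of i] PiE_arb[OF a, of i] by (cases "i \<in> {1..p}") (simp_all add: cyc_act_0)
  qed
  then show ?thesis
    using \<open>s < p\<close> unfolding x(1) one_wreath mult_wreath by simp
qed

lemma (in group) wreath_l_inv_ex:
  assumes "x \<in> carrier (wreath G p)"
  shows "\<exists>y\<in>carrier (wreath G p). y \<otimes>\<^bsub>wreath G p\<^esub> x = \<one>\<^bsub>wreath G p\<^esub>"
proof -
  obtain a s where x: "x = (a, s)" "s < p" and a: "a \<in> {1..p} \<rightarrow>\<^sub>E carrier G"
    using assms by (rule carrier_wreathE)
  define t where "t = (p - s) mod p"
  define y where "y = ((\<lambda>i\<in>{1..p}. inv (a (cyc_act p t i))), t)"
  have a_act: "a (cyc_act p t i) \<in> carrier G" for i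
    using PiE_mem_cyc_act[OF a] \<open>s < p\<close> by simp
  have "(\<lambda>i\<in>{1..p}. (\<lambda>i\<in>{1..p}. inv (a (cyc_act p t i))) i \<otimes> a (cyc_act p t i)) = (\<lambda>i\<in>{1..p}. \<one>)"
    using a_act by (intro restrict_ext) simp
  moreover have "(t + s) mod p = 0"
    using \<open>s < p\<close> by (cases "s = 0") (auto simp: t_def)
  ultimately have "y \<otimes>\<^bsub>wreath G p\<^esub> x = \<one>\<^bsub>wreath G p\<^esub>"
    unfolding x y_def one_wreath mult_wreath by (simp only: fst_conv snd_conv)
  moreover have "y \<in> carrier (wreath G p)"
    using a_act \<open>s < p\<close> by (simp add: y_def mem_carrier_wreath t_def)
  ultimately show ?thesis
    by blast
qed

lemma group_wreath:
  assumes "group B" and "0 < p"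
  shows "group (wreath B p)"
proof -
  interpret B: group B by fact
  show ?thesis
  proof (rule groupI)
    show "\<one>\<^bsub>wreath B p\<^esub> \<in> carrier (wreath B p)"
      using \<open>0 < p\<close> by (simp add: one_wreath mem_carrier_wreath)
  qed (simp_all add: B.wreath_mult_closed B.wreath_mult_assoc B.wreath_l_one B.wreath_l_inv_ex)
qed

lemma hom_derived_eq_one:
  assumes "group G" and "comm_group A" and "h \<in> hom G A"
    and "w \<in> derived G (carrier G)"
  shows "h w = \<one>\<^bsub>A\<^esub>"
proof -
  interpret A: comm_group A by fact
  interpret group_hom G A h
    using assms(1-3) A.is_group by (simp add: group_hom_def group_hom_axioms_def)
  have "h w \<in> derived A (h ` carrier G)"
    using assms(4) derived_img[of "carrier G"] by blast
  also have "derived A (h ` carrier G) = {\<one>\<^bsub>A\<^esub>}"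
    by (rule A.derived_eq_singleton) auto
  finally show ?thesis by simp
qed

lemma snd_hom_wreath: "(\<lambda>x. int (snd x)) \<in> hom (wreath B p) (integer_mod_group p)"
proof (rule homI)
  fix x assume "x \<in> carrier (wreath B p)"
  then show "int (snd x) \<in> carrier (integer_mod_group p)"
    by (auto elim: carrier_wreathE simp: carrier_integer_mod_group)
next
  fix x y assume "x \<in> carrier (wreath B p)" "y \<in> carrier (wreath B p)"
  then show "int (snd (x \<otimes>\<^bsub>wreath B p\<^esub> y)) = int (snd x) \<otimes>\<^bsub>integer_mod_group p\<^esub> int (snd y)"
    by (auto elim!: carrier_wreathE simp: mult_wreath of_nat_mod)
qed

lemma coord_prod_hom_wreath:
  assumes h: "h \<in> hom B A" and "comm_monoid A"
  shows "(\<lambda>x. finprod A (\<lambda>i. h (fst x i)) {1..p}) \<in> hom (wreath B p) A"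
proof -
  interpret A: comm_monoid A by fact
  have h_coord: "(\<lambda>i. h (a i)) \<in> {1..p} \<rightarrow> carrier A" if "a \<in> {1..p} \<rightarrow>\<^sub>E carrier B" for a
    by (intro Pi_I hom_in_carrier[OF h] PiE_mem[OF that])
  show ?thesis
  proof (rule homI)
    fix x assume "x \<in> carrier (wreath B p)"
    then obtain a s where "x = (a, s)" and "a \<in> {1..p} \<rightarrow>\<^sub>E carrier B"
      by (rule carrier_wreathE)
    then show "finprod A (\<lambda>i. h (fst x i)) {1..p} \<in> carrier A"
      by (simp only: fst_conv) (intro A.finprod_closed h_coord)
  next
    fix x y assume "x \<in> carrier (wreath B p)" "y \<in> carrier (wreath B p)"
    then obtain a s b t where xy: "x = (a, s)" "y = (b, t)" and "s < p"
      and a: "a \<in> {1..p} \<rightarrow>\<^sub>E carrier B" and b: "b \<in> {1..p} \<rightarrow>\<^sub>E carrier B"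
      by (metis carrier_wreathE)
    have b_act: "b (cyc_act p s i) \<in> carrier B" for i
      using PiE_mem_cyc_act[OF b] \<open>s < p\<close> by simp
    have ha: "(\<lambda>i. h (a i)) \<in> {1..p} \<rightarrow> carrier A" and hb: "(\<lambda>i. h (b i)) \<in> {1..p} \<rightarrow> carrier A"
      by (rule h_coord[OF a], rule h_coord[OF b])
    have hb_act: "(\<lambda>i. h (b (cyc_act p s i))) \<in> {1..p} \<rightarrow> carrier A"
      by (intro Pi_I hom_in_carrier[OF h] b_act)
    have "finprod A (\<lambda>i. h (fst (x \<otimes>\<^bsub>wreath B p\<^esub> y) i)) {1..p}
        = finprod A (\<lambda>i. h (a i) \<otimes>\<^bsub>A\<^esub> h (b (cyc_act p s i))) {1..p}"
    proof (rule A.finprod_cong')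
      fix i assume i: "i \<in> {1..p}"
      with PiE_mem[OF a i] b_act[of i]
      show "h (fst (x \<otimes>\<^bsub>wreath B p\<^esub> y) i) = h (a i) \<otimes>\<^bsub>A\<^esub> h (b (cyc_act p s i))"
        by (simp add: xy mult_wreath hom_mult[OF h])
    qed (use ha hb_act in auto)
    also have "\<dots> = finprod A (\<lambda>i. h (a i)) {1..p} \<otimes>\<^bsub>A\<^esub> finprod A (\<lambda>i. h (b (cyc_act p s i))) {1..p}"
      using ha hb_act by (rule A.finprod_multf)
    also have "finprod A (\<lambda>i. h (b (cyc_act p s i))) {1..p} = finprod A (\<lambda>i. h (b i)) {1..p}"
      using hb \<open>s < p\<close> by (rule A.finprod_cyc_act)
    finally show "finprod A (\<lambda>i. h (fst (x \<otimes>\<^bsub>wreath B p\<^esub> y) i)) {1..p}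
        = finprod A (\<lambda>i. h (fst x i)) {1..p} \<otimes>\<^bsub>A\<^esub> finprod A (\<lambda>i. h (fst y i)) {1..p}"
      by (simp add: xy)
  qed
qed

lemma prodl_Nil [simp]: "prodl G [] = \<one>\<^bsub>G\<^esub>"
  by (simp add: prodl_def)

lemma prodl_Cons [simp]: "prodl G (x # xs) = x \<otimes>\<^bsub>G\<^esub> prodl G xs"
  by (simp add: prodl_def)

lemma (in monoid) prodl_closed: "set xs \<subseteq> carrier G \<Longrightarrow> prodl G xs \<in> carrier G"
  by (induction xs) auto

lemma (in monoid) prodl_append:
  "set xs \<subseteq> carrier G \<Longrightarrow> set ys \<subseteq> carrier G \<Longrightarrow> prodl G (xs @ ys) = prodl G xs \<otimes> prodl G ys"
  by (induction xs) (auto simp: m_assoc prodl_closed)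

lemma (in group_hom) hom_prodl:
  assumes "comm_group H" and "distinct xs" and "\<forall>i\<in>set xs. f i \<in> carrier G"
  shows "h (prodl G (map f xs)) = finprod H (\<lambda>i. h (f i)) (set xs)"
  using assms(2,3)
proof (induction xs)
  case Nil
  interpret H: comm_group H by fact
  show ?case by simp
next
  case (Cons x xs)
  interpret H: comm_group H by fact
  have "prodl G (map f xs) \<in> carrier G"
    using Cons.prems by (intro G.prodl_closed) auto
  then have "h (prodl G (map f (x # xs))) = h (f x) \<otimes>\<^bsub>H\<^esub> finprod H (\<lambda>i. h (f i)) (set xs)"
    using Cons by simp
  also have "\<dots> = finprod H (\<lambda>i. h (f i)) (set (x # xs))"
    using Cons.prems by (auto simp: Pi_def)
  finally show ?case .
qed

lemma (in comm_group) finprod_inv: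
  assumes "f \<in> A \<rightarrow> carrier G"
  shows "finprod G (\<lambda>i. inv (f i)) A = inv (finprod G f A)"
proof -
  have "finprod G (\<lambda>i. inv (f i)) A \<otimes> finprod G f A = finprod G (\<lambda>i. inv (f i) \<otimes> f i) A"
    using assms by (intro finprod_multf[symmetric]) auto
  also have "\<dots> = finprod G (\<lambda>i. \<one>) A"
    using assms by (intro finprod_cong') (auto simp: Pi_iff)
  finally show ?thesis
    using assms by (intro inv_equality[symmetric]) (auto simp: Pi_iff)
qed

lemma (in group_hom) hom_inv_prodl_inv_mult:
  assumes "comm_group H" and "0 < p" and a: "a \<in> {1..p} \<rightarrow> carrier G"
  shows "h (inv (prodl G (map (\<lambda>i. inv (a i)) [1..<p])) \<otimes> a p) = finprod H (\<lambda>i. h (a i)) {1..p}"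
proof -
  interpret H: comm_group H by fact
  let ?P = "prodl G (map (\<lambda>i. inv (a i)) [1..<p])"
  have P: "?P \<in> carrier G"
    using a by (intro G.prodl_closed) auto
  have ha: "(\<lambda>i. h (a i)) \<in> {1..p} \<rightarrow> carrier H"
    using a by (auto simp: Pi_iff)
  have prefix: "finprod H (\<lambda>i. h (a i)) {1..<p} \<in> carrier H"
    using ha by (intro H.finprod_closed) auto
  have "h ?P = finprod H (\<lambda>i. h (inv (a i))) {1..<p}"
    using a by (simp add: hom_prodl[OF assms(1)] Pi_iff)
  also have "\<dots> = finprod H (\<lambda>i. inv\<^bsub>H\<^esub> h (a i)) {1..<p}"
    using a by (intro H.finprod_cong') (auto simp: Pi_iff)
  also have "\<dots> = inv\<^bsub>H\<^esub> finprod H (\<lambda>i. h (a i)) {1..<p}"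
    using ha by (intro H.finprod_inv) auto
  finally have "h (inv ?P) = finprod H (\<lambda>i. h (a i)) {1..<p}"
    using P prefix by simp
  then have "h (inv ?P \<otimes> a p) = h (a p) \<otimes>\<^bsub>H\<^esub> finprod H (\<lambda>i. h (a i)) {1..<p}"
    using P prefix a \<open>0 < p\<close> by (simp add: H.m_comm Pi_iff)
  also have "\<dots> = finprod H (\<lambda>i. h (a i)) (insert p {1..<p})"
    using ha \<open>0 < p\<close> by (subst H.finprod_insert) auto
  also have "insert p {1..<p} = {1..p}"
    using \<open>0 < p\<close> by auto
  finally show ?thesis .
qed

lemma snd_derived_wreath:
  assumes "group B" and "0 < p" and "w \<in> derived (wreath B p) (carrier (wreath B p))"
  shows "snd w = 0"
  using hom_derived_eq_one[OF group_wreath[OF assms(1,2)] abelian_integer_mod_group snd_hom_wreath assms(3)]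
  by simp

lemma last_coord_derived_wreath:
  assumes "group B" and "0 < p" and "w \<in> derived (wreath B p) (carrier (wreath B p))"
  shows "inv\<^bsub>B\<^esub> (prodl B (map (\<lambda>i. inv\<^bsub>B\<^esub> (fst w i)) [1..<p])) \<otimes>\<^bsub>B\<^esub> fst w p
    \<in> derived B (carrier B)" (is "?c \<in> ?D")
proof -
  interpret B: group B by fact
  interpret N: normal ?D B
    by (rule B.derived_self_is_normal)
  interpret W: group "wreath B p"
    using assms(1,2) by (rule group_wreath)
  have Q: "comm_group (B Mod ?D)"
    by (rule B.derived_quot_is_comm_group)
  interpret group_hom B "B Mod ?D" "\<lambda>x. ?D #>\<^bsub>B\<^esub> x"
    using N.r_coset_hom_Mod N.factorgroup_is_group by (simp add: group_hom_def group_hom_axioms_def)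
  have "w \<in> carrier (wreath B p)"
    using W.derived_in_carrier assms(3) by blast
  then have coords: "fst w \<in> {1..p} \<rightarrow>\<^sub>E carrier B"
    by (cases w) (simp add: mem_carrier_wreath)
  then have c: "?c \<in> carrier B"
    using \<open>0 < p\<close> by (intro B.m_closed B.inv_closed B.prodl_closed) (auto simp: PiE_iff)
  have "?D #>\<^bsub>B\<^esub> ?c = finprod (B Mod ?D) (\<lambda>i. ?D #>\<^bsub>B\<^esub> fst w i) {1..p}"
    using coords hom_inv_prodl_inv_mult[OF Q \<open>0 < p\<close>] by (simp add: PiE_iff)
  also have "\<dots> = ?D"
    using hom_derived_eq_one[OF W.is_group Q
        coord_prod_hom_wreath[OF N.r_coset_hom_Mod comm_group.axioms(1)[OF Q]] assms(3)]
    by simp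
  finally show ?thesis
    using B.rcos_self[OF c N.subgroup_axioms] by simp
qed

lemma derived_wreathE:
  assumes "group B" and "0 < p" and "w \<in> derived (wreath B p) (carrier (wreath B p))"
  obtains a where "w = (a, 0)" and "a \<in> {1..p} \<rightarrow>\<^sub>E carrier B"
    and "inv\<^bsub>B\<^esub> (prodl B (map (\<lambda>i. inv\<^bsub>B\<^esub> (a i)) [1..<p])) \<otimes>\<^bsub>B\<^esub> a p \<in> derived B (carrier B)"
proof -
  interpret W: group "wreath B p"
    using assms(1,2) by (rule group_wreath)
  have "w \<in> carrier (wreath B p)"
    using W.derived_in_carrier assms(3) by blast
  with snd_derived_wreath[OF assms] last_coord_derived_wreath[OF assms] that show ?thesis
    by (auto elim!: carrier_wreathE)
qed

lemma restrict_if_last_eq: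
  fixes p :: nat
  assumes "a \<in> {1..p} \<rightarrow>\<^sub>E A" and "0 < p" and "a p = y"
  shows "(\<lambda>i\<in>{1..p}. if i < p then a i else y) = a"
proof
  fix i
  show "(\<lambda>i\<in>{1..p}. if i < p then a i else y) i = a i"
    using assms PiE_arb[OF assms(1), of i] by (cases "i \<in> {1..p}") auto
qed

lemma (in group) comm_closed [intro, simp]:
  "a \<in> carrier G \<Longrightarrow> b \<in> carrier G \<Longrightarrow> comm G a b \<in> carrier G"
  by (simp add: comm_def)

lemma (in group) comm_prod_closed:
  "\<forall>j. f j \<in> carrier G \<and> g j \<in> carrier G \<Longrightarrow> comm_prod G f g n \<in> carrier G"
  unfolding comm_prod_def by (intro prodl_closed) auto

lemma (in group) inv_comm:
  assumes "a \<in> carrier G" and "b \<in> carrier G"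
  shows "inv (comm G a b) = comm G b a"
  using assms by (simp add: comm_def inv_mult_group m_assoc)

lemma (in group) comm_prod_single:
  "a \<in> carrier G \<Longrightarrow> b \<in> carrier G \<Longrightarrow> comm_prod G (\<lambda>_. a) (\<lambda>_. b) 1 = comm G a b"
  by (simp add: comm_prod_def)

lemma (in group) comm_prod_append:
  assumes "\<forall>j. f j \<in> carrier G \<and> g j \<in> carrier G" and "\<forall>j. f' j \<in> carrier G \<and> g' j \<in> carrier G"
  shows "comm_prod G f g n \<otimes> comm_prod G f' g' m
    = comm_prod G (\<lambda>j. if j \<le> n then f j else f' (j - n)) (\<lambda>j. if j \<le> n then g j else g' (j - n)) (n + m)"
proof -
  let ?F = "\<lambda>j. if j \<le> n then f j else f' (j - n)"
  let ?G = "\<lambda>j. if j \<le> n then g j else g' (j - n)"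
  have upt_split: "[1..<n + m + 1] = [1..<n + 1] @ [n + 1..<n + 1 + m]"
    using upt_add_eq_append[of 1 "n + 1" m] by (simp add: ac_simps)
  have first: "map (\<lambda>j. comm G (?F j) (?G j)) [1..<n + 1] = map (\<lambda>j. comm G (f j) (g j)) [1..<n + 1]"
    by (rule map_cong) auto
  have second: "map (\<lambda>j. comm G (?F j) (?G j)) [n + 1..<n + 1 + m] = map (\<lambda>j. comm G (f' j) (g' j)) [1..<m + 1]"
    by (rule nth_equalityI) (auto simp del: upt_Suc)
  have "set (map (\<lambda>j. comm G (f j) (g j)) xs) \<subseteq> carrier G"
    and "set (map (\<lambda>j. comm G (f' j) (g' j)) xs) \<subseteq> carrier G" for xs
    using assms by auto
  then show ?thesis
    unfolding comm_prod_def upt_split map_append first second by (rule prodl_append[symmetric])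
qed

lemma (in group) derived_imp_comm_prod:
  assumes "x \<in> derived G (carrier G)"
  shows "\<exists>n f g. (\<forall>j. f j \<in> carrier G \<and> g j \<in> carrier G) \<and> x = comm_prod G f g n"
  using assms unfolding derived_def
proof (induction rule: generate.induct)
  case one
  show ?case
    by (intro exI[of _ 0] exI[of _ "\<lambda>_. \<one>"]) (simp add: comm_prod_def)
next
  case (incl x)
  then obtain a b where "a \<in> carrier G" "b \<in> carrier G" "x = comm G a b"
    by (auto simp: comm_def)
  then have "x = comm_prod G (\<lambda>_. a) (\<lambda>_. b) 1"
    by (simp only: comm_prod_single)
  with \<open>a \<in> carrier G\<close> \<open>b \<in> carrier G\<close> show ?case
    by (intro exI[of _ "1::nat"]) (rule exI[of _ "\<lambda>_. a"], rule exI[of _ "\<lambda>_. b"], simp)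
next
  case (inv x)
  then obtain a b where "a \<in> carrier G" "b \<in> carrier G" "x = comm G a b"
    by (auto simp: comm_def)
  then have "inv x = comm_prod G (\<lambda>_. b) (\<lambda>_. a) 1"
    by (simp only: comm_prod_single inv_comm)
  with \<open>a \<in> carrier G\<close> \<open>b \<in> carrier G\<close> show ?case
    by (intro exI[of _ "1::nat"]) (rule exI[of _ "\<lambda>_. b"], rule exI[of _ "\<lambda>_. a"], simp)
next
  case (eng x y)
  then obtain n f g m f' g' where fg: "\<forall>j. f j \<in> carrier G \<and> g j \<in> carrier G"
    and fg': "\<forall>j. f' j \<in> carrier G \<and> g' j \<in> carrier G"
    and "x = comm_prod G f g n" "y = comm_prod G f' g' m"
    by blast
  define F where "F j = (if j \<le> n then f j else f' (j - n))" for j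
  define H where "H j = (if j \<le> n then g j else g' (j - n))" for j
  have "x \<otimes> y = comm_prod G F H (n + m)"
    unfolding F_def H_def \<open>x = _\<close> \<open>y = _\<close> using fg fg' by (rule comm_prod_append)
  moreover have "\<forall>j. F j \<in> carrier G \<and> H j \<in> carrier G"
    using fg fg' by (simp add: F_def H_def)
  ultimately show ?case
    by (intro exI[of _ "n + m"]) (rule exI[of _ F], rule exI[of _ H], simp)
qed

lemma (in group) comm_prod_comm_length:
  assumes "x \<in> derived G (carrier G)"
  obtains f g where "\<forall>j. f j \<in> carrier G \<and> g j \<in> carrier G" and "x = comm_prod G f g (comm_length G x)"
  using LeastI_ex[OF derived_imp_comm_prod[OF assms]] unfolding comm_length_def by blast

lemma comm_length_le_cw: "x \<in> derived G (carrier G) \<Longrightarrow> enat (comm_length G x) \<le> cw G"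
  unfolding cw_def by (rule SUP_upper)

theorem mainTheorem2:
  fixes B :: "('b, 'm) monoid_scheme" and p :: nat and w :: "(nat \<Rightarrow> 'b) \<times> nat"
  assumes "group B" and "p \<ge> 2"
    and "w \<in> derived (wreath B p) (carrier (wreath B p))"
  shows "\<exists>r f g k. (\<forall>i\<in>{1..<p}. r i \<in> carrier B)
      \<and> (\<forall>j\<in>{1..k}. f j \<in> carrier B \<and> g j \<in> carrier B)
      \<and> enat k \<le> cw B
      \<and> w = ((\<lambda>i\<in>{1..p}. if i < p then r i
               else prodl B (map (\<lambda>i. inv\<^bsub>B\<^esub> (r i)) [1..<p]) \<otimes>\<^bsub>B\<^esub> comm_prod B f g k), 0)"
proof -
  interpret B: group B by fact
  have "0 < p"
    using \<open>p \<ge> 2\<close> by simp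
  let ?P = "\<lambda>r. prodl B (map (\<lambda>i. inv\<^bsub>B\<^esub> (r i)) [1..<p])"
  obtain a where w: "w = (a, 0)" and a: "a \<in> {1..p} \<rightarrow>\<^sub>E carrier B"
    and c: "inv\<^bsub>B\<^esub> ?P a \<otimes>\<^bsub>B\<^esub> a p \<in> derived B (carrier B)" (is "?c \<in> _")
    using assms(1) \<open>0 < p\<close> assms(3) by (rule derived_wreathE)
  define k where "k = comm_length B ?c"
  obtain f g where fg: "\<forall>j. f j \<in> carrier B \<and> g j \<in> carrier B" and "?c = comm_prod B f g k"
    unfolding k_def using c by (rule B.comm_prod_comm_length)
  moreover have "?P a \<in> carrier B" and "a p \<in> carrier B"
    using a \<open>0 < p\<close> by (auto intro!: B.prodl_closed simp: PiE_iff)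
  ultimately have "a p = ?P a \<otimes>\<^bsub>B\<^esub> comm_prod B f g k"
    using B.comm_prod_closed[OF fg] by (simp add: B.inv_solve_left')
  show ?thesis
  proof (intro exI conjI)
    show "\<forall>i\<in>{1..<p}. a i \<in> carrier B"
      using a by auto
    show "\<forall>j\<in>{1..k}. f j \<in> carrier B \<and> g j \<in> carrier B"
      using fg by simp
    show "enat k \<le> cw B"
      unfolding k_def using c by (rule comm_length_le_cw)
    show "w = ((\<lambda>i\<in>{1..p}. if i < p then a i else ?P a \<otimes>\<^bsub>B\<^esub> comm_prod B f g k), 0)"
      unfolding restrict_if_last_eq[OF a \<open>0 < p\<close> \<open>a p = _\<close>] by (rule w)
  qed
qed

end
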